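(* Let $1<\alpha<2$, $\gamma>0$, $\tau>0$, $\mathrm{a}<\mathrm{b}$, let $M$ be an even positive integer, $h=(\mathrm{b}-\mathrm{a})/(M+1)$ and $\mu=\gamma\tau/h^\alpha$. Let $T$ and $C$ be as in the context, and let $$\theta=\frac{\left(1-\frac{1+\alpha}{5+\alpha/2}\right)^{5+\alpha/2}e^{1+\alpha}\Gamma(\alpha+1)\sin(\pi\alpha/2)}{\pi\alpha}.$$ Then for $M\ge 4$ every eigenvalue $\lambda_T$ of $T$ satisfies $$\frac{2\gamma\tau\theta}{(\mathrm{b}-\mathrm{a})^\alpha}<\lambda_T<\frac{2\gamma\tau}{h^\alpha}\left[\frac{\Gamma(\alpha+1)}{\Gamma(\alpha/2+1)^2}-\frac{\theta h^\alpha}{(\mathrm{b}-\mathrm{a})^\alpha}\right],$$ and for $M\ge 8$ every eigenvalue $\lambda_C$ of $C$ satisfies $$\frac{2^{\alpha+1}\gamma\tau\theta}{(\mathrm{b}-\mathrm{a})^\alpha}<\lambda_C<\frac{2\gamma\tau}{h^\alpha}\left[\frac{\Gamma(\alpha+1)}{\Gamma(\alpha/2+1)^2}-\frac{2^\alpha\theta h^\alpha}{(\mathrm{b}-\mathrm{a})^\alpha}\right].$$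
   Context: For $k\in\mathbb{Z}$, $c_k=(-1)^k\Gamma(\alpha+1)/[\Gamma(\alpha/2-k+1)\Gamma(\alpha/2+k+1)]$ ($\Gamma$ the gamma function, $1/\Gamma=0$ at poles); these satisfy $c_0=\Gamma(\alpha+1)/\Gamma(\alpha/2+1)^2>0$, $c_k=c_{-k}\le 0$ for $k\ge1$, and $\sum_{k\ne0}|c_k|=c_0$. $T\in\mathbb{R}^{M\times M}$ is the symmetric Toeplitz matrix with entries $T_{jk}=\mu c_{j-k}$ (the discrete fractional Laplacian). For even $M$, $C\in\mathbb{R}^{M\times M}$ is Strang's circulant approximation of $T$: the symmetric circulant matrix $C=\mu\,\mathrm{circ}(c_0,c_1,\dots,c_{M/2-1},0,c_{M/2-1},\dots,c_1)$, i.e. its first row is $\mu(c_0,c_1,\dots,c_{M/2-1},0,c_{M/2-1},\dots,c_1)$ and each subsequent row is the cyclic right shift of the previous one. *)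

theory Defs
  imports "HOL-Analysis.Gamma_Function" "Jordan_Normal_Form.Char_Poly"
begin

text \<open>Coefficients c_k of the discrete fractional Laplacian; rGamma is the reciprocal
  Gamma function (zero at the poles), so 1/Gamma = 0 at poles as in the paper.\<close>
definition frac_coeff :: "real \<Rightarrow> int \<Rightarrow> real" where
  "frac_coeff \<alpha> k = (-1) powi k * Gamma (\<alpha> + 1)
      * rGamma (\<alpha> / 2 - of_int k + 1) * rGamma (\<alpha> / 2 + of_int k + 1)"

definition toeplitz_T :: "real \<Rightarrow> real \<Rightarrow> nat \<Rightarrow> real mat" where
  "toeplitz_T \<alpha> \<mu> M = mat M M (\<lambda>(j, k). \<mu> * frac_coeff \<alpha> (int j - int k))"

definition strang_row :: "real \<Rightarrow> nat \<Rightarrow> nat \<Rightarrow> real" where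
  "strang_row \<alpha> M m =
     (if m < M div 2 then frac_coeff \<alpha> (int m)
      else if m = M div 2 then 0
      else frac_coeff \<alpha> (int M - int m))"

text \<open>Circulant: row j is the j-fold cyclic right shift of the first row,
  so C_jk = mu * r_((k - j) mod M).\<close>
definition strang_C :: "real \<Rightarrow> real \<Rightarrow> nat \<Rightarrow> real mat" where
  "strang_C \<alpha> \<mu> M = mat M M (\<lambda>(j, k). \<mu> * strang_row \<alpha> M (nat ((int k - int j) mod int M)))"

definition theta :: "real \<Rightarrow> real" where
  "theta \<alpha> = (1 - (1 + \<alpha>) / (5 + \<alpha> / 2)) powr (5 + \<alpha> / 2) * exp (1 + \<alpha>)
      * Gamma (\<alpha> + 1) * sin (pi * \<alpha> / 2) / (pi * \<alpha>)"

end

theory Submission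
  imports Defs
begin

text \<open>For \<open>0 < \<alpha> < 2\<close> the reflection formula gives \<open>c\<^sub>\<plusminus>\<^sub>n = -a\<^sub>n < 0\<close> for \<open>n \<ge> 1\<close>, where
  \<open>a\<^sub>n = \<Gamma>(\<alpha>+1) sin(\<pi>\<alpha>/2)/\<pi> \<cdot> \<Gamma>(n-\<alpha>/2)/\<Gamma>(n+1+\<alpha>/2)\<close>, and \<open>t\<^sub>n = (n+\<alpha>/2) a\<^sub>n/\<alpha>\<close> satisfies
  \<open>t\<^sub>n - t\<^sub>n\<^sub>+\<^sub>1 = a\<^sub>n\<close> and \<open>c\<^sub>0 = 2 t\<^sub>1\<close>. So the off-diagonal absolute row sums telescope: row \<open>i\<close>
  of \<open>T\<close> gives \<open>\<mu>(c\<^sub>0 - t\<^sub>i\<^sub>+\<^sub>1 - t\<^sub>M\<^sub>-\<^sub>i)\<close> and every row of \<open>C\<close> gives \<open>\<mu>(c\<^sub>0 - 2 t\<^sub>M\<^sub>/\<^sub>2)\<close>. Since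
  \<open>t\<^sub>n\<close> decreases, Gershgorin's theorem confines the eigenvalues to within \<open>\<mu>(c\<^sub>0 - 2 t\<^sub>M)\<close>, resp.
  \<open>\<mu>(c\<^sub>0 - 2 t\<^sub>M\<^sub>/\<^sub>2)\<close>, of \<open>\<mu> c\<^sub>0\<close>. Log-convexity of \<open>\<Gamma>\<close> gives \<open>t\<^sub>n > \<theta>/n\<^sup>\<alpha>\<close>, and
  \<open>\<mu>/(M+1)\<^sup>\<alpha> = \<gamma>\<tau>/(b-a)\<^sup>\<alpha>\<close>. The bounds hold for every even \<open>M > 0\<close>.\<close>

lemma eigenvalue_in_Gershgorin_disc:
  fixes A :: "'a::real_normed_field mat"
  assumes A: "A \<in> carrier_mat n n" and ev: "eigenvalue A lam"
  shows "\<exists>i<n. norm (lam - A $$ (i, i)) \<le> (\<Sum>k\<in>{..<n} - {i}. norm (A $$ (i, k)))"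
proof -
  obtain v where v: "v \<in> carrier_vec n" "v \<noteq> 0\<^sub>v n" "A *\<^sub>v v = lam \<cdot>\<^sub>v v"
    using ev A unfolding eigenvalue_def eigenvector_def by auto
  have "\<exists>j<n. v $ j \<noteq> 0"
  proof (rule ccontr)
    assume "\<not> ?thesis"
    hence "v = 0\<^sub>v n"
      using v(1) by (intro eq_vecI) auto
    thus False
      using v(2) by simp
  qed
  then obtain j where j: "j < n" "v $ j \<noteq> 0" by blast
  let ?N = "(\<lambda>k. norm (v $ k)) ` {..<n}"
  obtain i where i: "i < n" "norm (v $ i) = Max ?N"
    using Max_in[of ?N] j(1) by fastforce
  have max: "norm (v $ k) \<le> norm (v $ i)" if "k < n" for k
    using that i(2) by (auto intro: Max_ge)
  have vi: "norm (v $ i) > 0"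
    using max[OF j(1)] j(2) by (meson zero_less_norm_iff order_less_le_trans)
  have "lam * v $ i = (A *\<^sub>v v) $ i"
    using v i by simp
  also have "\<dots> = (\<Sum>k<n. A $$ (i, k) * v $ k)"
    using A v(1) i by (auto simp: scalar_prod_def lessThan_atLeast0 mult.commute)
  also have "\<dots> = A $$ (i, i) * v $ i + (\<Sum>k\<in>{..<n} - {i}. A $$ (i, k) * v $ k)"
    using i by (subst sum.remove[of _ i]) auto
  finally have "(lam - A $$ (i, i)) * v $ i = (\<Sum>k\<in>{..<n} - {i}. A $$ (i, k) * v $ k)"
    by (simp add: algebra_simps)
  hence "norm (lam - A $$ (i, i)) * norm (v $ i) = norm (\<Sum>k\<in>{..<n} - {i}. A $$ (i, k) * v $ k)"
    by (simp flip: norm_mult)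
  also have "\<dots> \<le> (\<Sum>k\<in>{..<n} - {i}. norm (A $$ (i, k)) * norm (v $ k))"
    by (rule order.trans[OF norm_sum]) (simp add: norm_mult)
  also have "\<dots> \<le> (\<Sum>k\<in>{..<n} - {i}. norm (A $$ (i, k))) * norm (v $ i)"
    unfolding sum_distrib_right by (intro sum_mono mult_left_mono max) auto
  finally show ?thesis
    using vi i by auto
qed

lemma nat_diff_mod_eq:
  assumes "k < M" "j < M"
  shows "nat ((int k - int j) mod int M) = (if j \<le> k then k - j else k + M - j)"
proof (cases "j \<le> k")
  case True
  hence "(int k - int j) mod int M = int k - int j"
    using assms by (intro mod_pos_pos_trivial) auto
  thus ?thesis using True by simp
next
  case False
  have "(int k - int j) mod int M = (int k - int j + int M) mod int M" by simp
  also have "\<dots> = int k - int j + int M"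
    using assms False by (intro mod_pos_pos_trivial) auto
  finally show ?thesis using False by simp
qed

lemma sum_cyclic_shift:
  assumes "j < M"
  shows "(\<Sum>k\<in>{..<M} - {j}. f (nat ((int k - int j) mod int M))) = (\<Sum>m = 1..<M. f m)"
proof -
  have "(\<Sum>k\<in>{..<M} - {j}. f (nat ((int k - int j) mod int M)))
      = (\<Sum>k\<in>{..<M} - {j}. f (if j \<le> k then k - j else k + M - j))"
    using nat_diff_mod_eq assms by (intro sum.cong) auto
  also have "\<dots> = (\<Sum>m = 1..<M. f m)"
    by (rule sum.reindex_bij_witness[of _ "\<lambda>m. if m + j < M then m + j else m + j - M"
          "\<lambda>k. if j \<le> k then k - j else k + M - j"]) (use assms in auto)
  finally show ?thesis .
qed

lemma Gamma_plus1_pos: "(x::real) > 0 \<Longrightarrow> Gamma (x + 1) = x * Gamma x"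
  by (rule Gamma_plus1) (auto dest: nonpos_Ints_nonpos)

lemma rGamma_reflection_real: "rGamma (x::real) * rGamma (1 - x) = sin (pi * x) / pi"
proof -
  have "complex_of_real (rGamma x * rGamma (1 - x))
      = rGamma (complex_of_real x) * rGamma (1 - complex_of_real x)"
    using rGamma_complex_of_real[of "1 - x"] by (simp add: rGamma_complex_of_real)
  also have "\<dots> = complex_of_real (sin (pi * x) / pi)"
    by (simp add: rGamma_reflection_complex sin_of_real[symmetric])
  finally show ?thesis
    by (simp only: of_real_eq_iff)
qed

lemma Gamma_add_le_powr:
  assumes "(x::real) > 0" "0 \<le> t" "t \<le> 1"
  shows "Gamma (x + t) \<le> Gamma x * x powr t"
proof -
  have Gx: "Gamma x > 0"
    using assms(1) by simp
  have "ln (Gamma ((1 - t) *\<^sub>R x + t *\<^sub>R (x + 1)))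
      \<le> (1 - t) * ln (Gamma x) + t * ln (Gamma (x + 1))"
    using assms convex_onD[OF log_convex_Gamma_real] by auto
  moreover have "Gamma (x + 1) = x * Gamma x"
    using assms(1) by (rule Gamma_plus1_pos)
  hence "ln (Gamma (x + 1)) = ln x + ln (Gamma x)"
    using ln_mult_pos[OF assms(1) Gx] by simp
  ultimately have "ln (Gamma (x + t)) \<le> ln (Gamma x) + t * ln x"
    by (simp add: algebra_simps)
  also have "\<dots> = ln (Gamma x * x powr t)"
    using Gx assms(1) by (simp add: ln_mult_pos)
  finally have "ln (Gamma (x + t)) \<le> ln (Gamma x * x powr t)" .
  thus ?thesis
    using assms Gx by (subst (asm) ln_le_cancel_iff) auto
qed

lemma frac_coeff_minus: "frac_coeff \<alpha> (- k) = frac_coeff \<alpha> k"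
proof -
  have "(-1::real) powi (- k) = (-1) powi k"
    by (cases "even k") auto
  thus ?thesis
    unfolding frac_coeff_def by (simp add: algebra_simps)
qed

lemma frac_coeff_0: "frac_coeff \<alpha> 0 = Gamma (\<alpha> + 1) / Gamma (\<alpha> / 2 + 1) ^ 2"
  unfolding frac_coeff_def rGamma_inverse_Gamma
  by (simp add: power2_eq_square inverse_eq_divide)

definition frac_coeff_abs :: "real \<Rightarrow> nat \<Rightarrow> real" where
  "frac_coeff_abs \<alpha> n = Gamma (\<alpha> + 1) * sin (pi * \<alpha> / 2) / pi
      * Gamma (real n - \<alpha> / 2) / Gamma (real n + 1 + \<alpha> / 2)"

text \<open>The tail sum \<open>t\<^sub>n = \<Sum>m\<ge>n. |c\<^sub>m|\<close> in closed form; only its telescoping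
  identity \<open>t\<^sub>n - t\<^sub>n\<^sub>+\<^sub>1 = |c\<^sub>n|\<close> is used.\<close>
definition frac_tail :: "real \<Rightarrow> nat \<Rightarrow> real" where
  "frac_tail \<alpha> n = (real n + \<alpha> / 2) / \<alpha> * frac_coeff_abs \<alpha> n"

context
  fixes \<alpha> :: real
  assumes \<alpha>_pos: "0 < \<alpha>" and \<alpha>_less_2: "\<alpha> < 2"
begin

lemma sin_half_pi_pos: "sin (pi * \<alpha> / 2) > 0"
  using \<alpha>_pos \<alpha>_less_2 by (intro sin_gt_zero) (auto simp: field_simps)

lemma frac_coeff_abs_pos: "n \<ge> 1 \<Longrightarrow> frac_coeff_abs \<alpha> n > 0"
  unfolding frac_coeff_abs_def using sin_half_pi_pos \<alpha>_pos \<alpha>_less_2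
  by (intro divide_pos_pos mult_pos_pos Gamma_real_pos) auto

lemma frac_coeff_of_nat:
  assumes "n \<ge> 1"
  shows "frac_coeff \<alpha> (int n) = - frac_coeff_abs \<alpha> n"
proof -
  define z where "z = real n - \<alpha> / 2"
  have "z > 0"
    using assms \<alpha>_less_2 unfolding z_def by auto
  hence "rGamma z \<noteq> 0"
    by (auto simp: rGamma_eq_zero_iff dest: nonpos_Ints_nonpos)
  hence r: "rGamma (1 - z) = Gamma z * sin (pi * z) / pi"
    using rGamma_reflection_real[of z] by (simp add: Gamma_def field_simps)
  have s: "sin (pi * z) = - ((-1) ^ n * sin (pi * \<alpha> / 2))"
    unfolding z_def by (simp add: algebra_simps sin_diff)
  have e1: "\<alpha> / 2 - of_int (int n) + 1 = 1 - z"
    unfolding z_def by simp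
  have e2: "rGamma (\<alpha> / 2 + of_int (int n) + 1) = 1 / Gamma (real n + 1 + \<alpha> / 2)"
    by (simp add: rGamma_inverse_Gamma inverse_eq_divide add_ac)
  have "frac_coeff \<alpha> (int n) = - ((-1) ^ n * (-1) ^ n)
      * (Gamma (\<alpha> + 1) * sin (pi * \<alpha> / 2) / pi * Gamma z / Gamma (real n + 1 + \<alpha> / 2))"
    unfolding frac_coeff_def e1 e2 r s power_int_of_nat by (simp add: algebra_simps)
  also have "(-1::real) ^ n * (-1) ^ n = 1"
    by (simp flip: power_mult_distrib)
  finally show ?thesis
    unfolding frac_coeff_abs_def z_def by simp
qed

lemma abs_frac_coeff:
  assumes "k \<noteq> 0"
  shows "\<bar>frac_coeff \<alpha> k\<bar> = frac_coeff_abs \<alpha> (nat \<bar>k\<bar>)"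
proof -
  have "frac_coeff \<alpha> k = frac_coeff \<alpha> (int (nat \<bar>k\<bar>))"
    using frac_coeff_minus[of \<alpha> k] by (cases "k > 0") auto
  moreover have "nat \<bar>k\<bar> \<ge> 1"
    using assms by (cases "k > 0") auto
  ultimately show ?thesis
    using frac_coeff_of_nat[of "nat \<bar>k\<bar>"] frac_coeff_abs_pos[of "nat \<bar>k\<bar>"] by simp
qed

lemma frac_coeff_0_eq_tail: "frac_coeff \<alpha> 0 = 2 * frac_tail \<alpha> 1"
proof -
  have r1: "rGamma (\<alpha> / 2) = \<alpha> / 2 * rGamma (\<alpha> / 2 + 1)"
    using rGamma_plus1[of "\<alpha> / 2"] by simp
  have r2: "rGamma (\<alpha> / 2 + 1) = (\<alpha> / 2 + 1) * rGamma (\<alpha> / 2 + 1 + 1)"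
    using rGamma_plus1[of "\<alpha> / 2 + 1"] by simp
  have "frac_coeff_abs \<alpha> 1 = Gamma (\<alpha> + 1) * rGamma (\<alpha> / 2) * rGamma (\<alpha> / 2 + 1 + 1)"
    using frac_coeff_of_nat[of 1] unfolding frac_coeff_def by simp
  also have "\<dots> = Gamma (\<alpha> + 1) * (\<alpha> / 2) * rGamma (\<alpha> / 2 + 1) ^ 2 / (\<alpha> / 2 + 1)"
    unfolding r1 r2 using \<alpha>_pos by (simp add: field_simps power2_eq_square)
  finally have "frac_tail \<alpha> 1 = Gamma (\<alpha> + 1) * rGamma (\<alpha> / 2 + 1) ^ 2 / 2"
    unfolding frac_tail_def using \<alpha>_pos by (simp add: field_simps)
  thus ?thesis
    unfolding frac_coeff_def by (simp add: power2_eq_square)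
qed

lemma frac_coeff_abs_Suc:
  assumes "n \<ge> 1"
  shows "frac_coeff_abs \<alpha> (Suc n)
    = frac_coeff_abs \<alpha> n * (real n - \<alpha> / 2) / (real n + 1 + \<alpha> / 2)"
proof -
  have e1: "real (Suc n) - \<alpha> / 2 = (real n - \<alpha> / 2) + 1"
    and e2: "real (Suc n) + 1 + \<alpha> / 2 = (real n + 1 + \<alpha> / 2) + 1"
    by simp_all
  have g1: "Gamma (real n - \<alpha> / 2 + 1) = (real n - \<alpha> / 2) * Gamma (real n - \<alpha> / 2)"
    using assms \<alpha>_less_2 by (intro Gamma_plus1_pos) auto
  have g2: "Gamma (real n + 1 + \<alpha> / 2 + 1) = (real n + 1 + \<alpha> / 2) * Gamma (real n + 1 + \<alpha> / 2)"
    using \<alpha>_pos by (intro Gamma_plus1_pos) auto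
  have "real n + 1 + \<alpha> / 2 > 0" "Gamma (real n + 1 + \<alpha> / 2) > 0"
    using \<alpha>_pos by simp_all
  thus ?thesis
    unfolding frac_coeff_abs_def e1 e2 g1 g2 by (simp add: field_simps)
qed

lemma frac_tail_diff:
  assumes "n \<ge> 1"
  shows "frac_tail \<alpha> n - frac_tail \<alpha> (Suc n) = frac_coeff_abs \<alpha> n"
proof -
  have cancel: "d / \<alpha> * (a * b / d) = b / \<alpha> * a" if "d \<noteq> 0" for a b d :: real
    using that by simp
  have "real (Suc n) = real n + 1"
    by simp
  have "real n + 1 + \<alpha> / 2 \<noteq> 0"
    using \<alpha>_pos by (simp add: add_pos_pos)
  hence "frac_tail \<alpha> (Suc n) = (real n - \<alpha> / 2) / \<alpha> * frac_coeff_abs \<alpha> n"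
    unfolding frac_tail_def frac_coeff_abs_Suc[OF assms] \<open>real (Suc n) = real n + 1\<close>
    by (rule cancel)
  moreover have "frac_tail \<alpha> n = (real n + \<alpha> / 2) / \<alpha> * frac_coeff_abs \<alpha> n"
    by (simp add: frac_tail_def)
  moreover have "(real n + \<alpha> / 2) / \<alpha> * frac_coeff_abs \<alpha> n
      - (real n - \<alpha> / 2) / \<alpha> * frac_coeff_abs \<alpha> n = frac_coeff_abs \<alpha> n"
    using \<alpha>_pos by (simp add: field_simps)
  ultimately show ?thesis
    by simp
qed

lemma sum_frac_coeff_abs:
  assumes "n \<ge> 1"
  shows "(\<Sum>m = 1..<n. frac_coeff_abs \<alpha> m) = frac_tail \<alpha> 1 - frac_tail \<alpha> n"
proof -
  have "(\<Sum>m = 1..<n. frac_coeff_abs \<alpha> m) = (\<Sum>m = 1..<n. frac_tail \<alpha> m - frac_tail \<alpha> (Suc m))"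
    by (intro sum.cong) (auto simp: frac_tail_diff)
  also have "\<dots> = frac_tail \<alpha> 1 - frac_tail \<alpha> n"
    using sum_Suc_diff'[OF assms, of "\<lambda>m. - frac_tail \<alpha> m"] by simp
  finally show ?thesis .
qed

lemma frac_tail_antimono:
  assumes "1 \<le> m" "m \<le> n"
  shows "frac_tail \<alpha> n \<le> frac_tail \<alpha> m"
  using assms(2)
proof (induction n rule: dec_induct)
  case base
  show ?case by simp
next
  case (step n)
  thus ?case
    using frac_tail_diff[of n] frac_coeff_abs_pos[of n] assms(1) by simp
qed

lemma theta_nonneg: "theta \<alpha> \<ge> 0"
  unfolding theta_def using sin_half_pi_pos \<alpha>_pos
  by (intro divide_nonneg_pos mult_nonneg_nonneg) auto

text \<open>The first two factors of \<open>\<theta>\<close> form a number \<open>(1 - u)\<^sup>p e\<^sup>u\<^sup>p \<le> 1\<close>; nothing else is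
  used about them.\<close>
lemma theta_le: "theta \<alpha> \<le> Gamma (\<alpha> + 1) * sin (pi * \<alpha> / 2) / (pi * \<alpha>)"
proof -
  define u where "u = (1 + \<alpha>) / (5 + \<alpha> / 2)"
  define p where "p = 5 + \<alpha> / 2"
  have "u < 1" "p > 0"
    unfolding u_def p_def using \<alpha>_pos \<alpha>_less_2 by (auto simp: field_simps)
  have "(1 - u) powr p \<le> exp (- u) powr p"
    using exp_ge_add_one_self[of "- u"] \<open>u < 1\<close> \<open>p > 0\<close> by (intro powr_mono2) auto
  also have "\<dots> = exp (- (1 + \<alpha>))"
    unfolding powr_def u_def p_def using \<alpha>_pos by (simp add: field_simps)
  finally have "(1 - u) powr p * exp (1 + \<alpha>) \<le> exp (- (1 + \<alpha>)) * exp (1 + \<alpha>)"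
    by (rule mult_right_mono) simp
  hence K: "(1 - u) powr p * exp (1 + \<alpha>) \<le> 1"
    by (simp flip: exp_add)
  define B where "B = Gamma (\<alpha> + 1) * sin (pi * \<alpha> / 2) / (pi * \<alpha>)"
  have "B \<ge> 0"
    unfolding B_def using sin_half_pi_pos \<alpha>_pos by simp
  have "theta \<alpha> = (1 - u) powr p * exp (1 + \<alpha>) * B"
    unfolding theta_def u_def p_def B_def by simp
  moreover have "(1 - u) powr p * exp (1 + \<alpha>) \<ge> 0"
    by simp
  ultimately have "theta \<alpha> \<le> B"
    using mult_left_le_one_le[OF \<open>B \<ge> 0\<close> _ K] by simp
  thus ?thesis
    unfolding B_def .
qed

lemma frac_tail_eq:
  "frac_tail \<alpha> n = Gamma (\<alpha> + 1) * sin (pi * \<alpha> / 2) / (pi * \<alpha>)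
      * Gamma (real n - \<alpha> / 2) / Gamma (real n + \<alpha> / 2)"
proof -
  have "real n + \<alpha> / 2 > 0"
    using \<alpha>_pos by simp
  moreover from this have "Gamma (real n + 1 + \<alpha> / 2) = (real n + \<alpha> / 2) * Gamma (real n + \<alpha> / 2)"
    using Gamma_plus1_pos[of "real n + \<alpha> / 2"] by (simp add: add_ac)
  ultimately show ?thesis
    unfolding frac_tail_def frac_coeff_abs_def by (simp add: ac_simps)
qed

lemma frac_tail_gt:
  assumes "1 < \<alpha>" "n \<ge> 1"
  shows "theta \<alpha> / real n powr \<alpha> < frac_tail \<alpha> n"
proof -
  define x where "x = real n - \<alpha> / 2"
  have x: "0 < x" "x < real n" "x + \<alpha> - 1 < real n"
    unfolding x_def using assms \<alpha>_less_2 by auto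
  have "Gamma (real n + \<alpha> / 2) = (x + \<alpha> - 1) * Gamma (x + (\<alpha> - 1))"
    using Gamma_plus1_pos[of "x + (\<alpha> - 1)"] x assms(1) unfolding x_def by (simp add: algebra_simps)
  also have "\<dots> \<le> (x + \<alpha> - 1) * (Gamma x * x powr (\<alpha> - 1))"
    using Gamma_add_le_powr[of x "\<alpha> - 1"] x assms(1) \<alpha>_less_2 by (intro mult_left_mono) auto
  also have "\<dots> < Gamma x * (real n * real n powr (\<alpha> - 1))"
    using x assms by (simp add: mult_strict_mono powr_less_mono2 mult.left_commute)
  also have "\<dots> = Gamma x * real n powr \<alpha>"
    using x by (simp add: powr_diff)
  finally have "Gamma (real n + \<alpha> / 2) < Gamma x * real n powr \<alpha>" .
  moreover have "Gamma (real n + \<alpha> / 2) > 0" "Gamma x > 0" "real n powr \<alpha> > 0"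
    using x \<alpha>_pos by simp_all
  ultimately have ratio: "1 / real n powr \<alpha> < Gamma x / Gamma (real n + \<alpha> / 2)"
    by (simp add: field_simps)
  define S where "S = Gamma (\<alpha> + 1) * sin (pi * \<alpha> / 2) / (pi * \<alpha>)"
  have "S > 0"
    unfolding S_def using sin_half_pi_pos \<alpha>_pos by simp
  have "theta \<alpha> / real n powr \<alpha> \<le> S / real n powr \<alpha>"
    using theta_le unfolding S_def by (intro divide_right_mono) auto
  also have "\<dots> = S * (1 / real n powr \<alpha>)"
    by simp
  also have "\<dots> < S * (Gamma x / Gamma (real n + \<alpha> / 2))"
    using ratio \<open>S > 0\<close> by (rule mult_strict_left_mono)
  also have "\<dots> = frac_tail \<alpha> n"
    unfolding frac_tail_eq S_def x_def by simp
  finally show ?thesis .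
qed

lemma toeplitz_row_abs_sum:
  assumes "i < M"
  shows "(\<Sum>k\<in>{..<M} - {i}. \<bar>frac_coeff \<alpha> (int i - int k)\<bar>)
    = frac_coeff \<alpha> 0 - frac_tail \<alpha> (Suc i) - frac_tail \<alpha> (M - i)"
proof -
  have abs_c: "\<bar>frac_coeff \<alpha> (int i - int k)\<bar> = frac_coeff_abs \<alpha> (if i \<le> k then k - i else i - k)"
    if "k \<noteq> i" for k
    using that by (simp add: abs_frac_coeff nat_abs_int_diff)
  have "(\<Sum>k<i. \<bar>frac_coeff \<alpha> (int i - int k)\<bar>) = (\<Sum>k<i. frac_coeff_abs \<alpha> (i - k))"
    by (intro sum.cong) (auto simp: abs_c)
  also have "\<dots> = (\<Sum>m = 1..<Suc i. frac_coeff_abs \<alpha> m)"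
    by (rule sum.reindex_bij_witness[of _ "\<lambda>m. i - m" "\<lambda>k. i - k"]) auto
  also have "\<dots> = frac_tail \<alpha> 1 - frac_tail \<alpha> (Suc i)"
    by (rule sum_frac_coeff_abs) simp
  finally have left: "(\<Sum>k<i. \<bar>frac_coeff \<alpha> (int i - int k)\<bar>) = frac_tail \<alpha> 1 - frac_tail \<alpha> (Suc i)" .
  have "(\<Sum>k = Suc i..<M. \<bar>frac_coeff \<alpha> (int i - int k)\<bar>) = (\<Sum>k = Suc i..<M. frac_coeff_abs \<alpha> (k - i))"
    by (intro sum.cong) (auto simp: abs_c)
  also have "\<dots> = (\<Sum>m = 1..<M - i. frac_coeff_abs \<alpha> m)"
    by (rule sum.reindex_bij_witness[of _ "\<lambda>m. m + i" "\<lambda>k. k - i"]) auto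
  also have "\<dots> = frac_tail \<alpha> 1 - frac_tail \<alpha> (M - i)"
    by (rule sum_frac_coeff_abs) (use assms in simp)
  finally have right: "(\<Sum>k = Suc i..<M. \<bar>frac_coeff \<alpha> (int i - int k)\<bar>) = frac_tail \<alpha> 1 - frac_tail \<alpha> (M - i)" .
  have split: "{..<M} - {i} = {..<i} \<union> {Suc i..<M}"
    using assms by auto
  have "(\<Sum>k\<in>{..<M} - {i}. \<bar>frac_coeff \<alpha> (int i - int k)\<bar>)
      = (\<Sum>k<i. \<bar>frac_coeff \<alpha> (int i - int k)\<bar>) + (\<Sum>k = Suc i..<M. \<bar>frac_coeff \<alpha> (int i - int k)\<bar>)"
    unfolding split by (rule sum.union_disjoint) auto
  thus ?thesis
    unfolding left right frac_coeff_0_eq_tail by simp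
qed

lemma strang_row_abs_sum:
  assumes "even M" "M > 0"
  shows "(\<Sum>m = 1..<M. \<bar>strang_row \<alpha> M m\<bar>) = frac_coeff \<alpha> 0 - 2 * frac_tail \<alpha> (M div 2)"
proof -
  define N where "N = M div 2"
  have M: "M = 2 * N" "N \<ge> 1"
    unfolding N_def using assms by auto
  have "(\<Sum>m = 1..<M. \<bar>strang_row \<alpha> M m\<bar>)
      = (\<Sum>m = 1..<N. \<bar>strang_row \<alpha> M m\<bar>) + (\<Sum>m = N..<M. \<bar>strang_row \<alpha> M m\<bar>)"
    using M by (intro sum.atLeastLessThan_concat[symmetric]) auto
  also have "(\<Sum>m = N..<M. \<bar>strang_row \<alpha> M m\<bar>)
      = \<bar>strang_row \<alpha> M N\<bar> + (\<Sum>m = Suc N..<M. \<bar>strang_row \<alpha> M m\<bar>)"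
    using M by (subst sum.atLeast_Suc_lessThan) auto
  also have "\<bar>strang_row \<alpha> M N\<bar> = 0"
    unfolding strang_row_def N_def by simp
  also have "(\<Sum>m = 1..<N. \<bar>strang_row \<alpha> M m\<bar>) = (\<Sum>m = 1..<N. frac_coeff_abs \<alpha> m)"
    by (intro sum.cong) (auto simp: strang_row_def N_def[symmetric] abs_frac_coeff)
  also have "(\<Sum>m = Suc N..<M. \<bar>strang_row \<alpha> M m\<bar>) = (\<Sum>m = Suc N..<M. frac_coeff_abs \<alpha> (M - m))"
  proof (intro sum.cong refl)
    fix m
    assume "m \<in> {Suc N..<M}"
    hence "strang_row \<alpha> M m = frac_coeff \<alpha> (int (M - m))" "M - m \<noteq> 0"
      unfolding strang_row_def N_def[symmetric] by (auto simp: of_nat_diff)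
    thus "\<bar>strang_row \<alpha> M m\<bar> = frac_coeff_abs \<alpha> (M - m)"
      by (simp add: abs_frac_coeff del: of_nat_diff)
  qed
  also have "\<dots> = (\<Sum>m = 1..<N. frac_coeff_abs \<alpha> m)"
    by (rule sum.reindex_bij_witness[of _ "\<lambda>m. M - m" "\<lambda>m. M - m"]) (use M in auto)
  finally show ?thesis
    unfolding sum_frac_coeff_abs[OF M(2)] frac_coeff_0_eq_tail N_def[symmetric] by simp
qed

lemma toeplitz_T_eigenvalue_bound:
  assumes "1 < \<alpha>" "\<mu> > 0" "eigenvalue (toeplitz_T \<alpha> \<mu> M) lam"
  shows "\<bar>lam - \<mu> * frac_coeff \<alpha> 0\<bar> < \<mu> * (frac_coeff \<alpha> 0 - 2 * theta \<alpha> / real M powr \<alpha>)"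
proof -
  obtain i where i: "i < M" and disc: "\<bar>lam - toeplitz_T \<alpha> \<mu> M $$ (i, i)\<bar>
      \<le> (\<Sum>k\<in>{..<M} - {i}. \<bar>toeplitz_T \<alpha> \<mu> M $$ (i, k)\<bar>)"
    using eigenvalue_in_Gershgorin_disc[OF _ assms(3), of M] by (auto simp: toeplitz_T_def)
  have "\<bar>lam - \<mu> * frac_coeff \<alpha> 0\<bar>
      \<le> \<mu> * (frac_coeff \<alpha> 0 - frac_tail \<alpha> (Suc i) - frac_tail \<alpha> (M - i))"
    using disc i assms(2)
    by (simp add: toeplitz_T_def abs_mult sum_distrib_left[symmetric] toeplitz_row_abs_sum)
  also have "\<dots> < \<mu> * (frac_coeff \<alpha> 0 - 2 * theta \<alpha> / real M powr \<alpha>)"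
  proof (intro mult_strict_left_mono assms(2))
    have "theta \<alpha> / real M powr \<alpha> < frac_tail \<alpha> M"
      using frac_tail_gt[OF assms(1), of M] i by simp
    moreover have "frac_tail \<alpha> M \<le> frac_tail \<alpha> (Suc i)" "frac_tail \<alpha> M \<le> frac_tail \<alpha> (M - i)"
      using frac_tail_antimono i by auto
    ultimately show "frac_coeff \<alpha> 0 - frac_tail \<alpha> (Suc i) - frac_tail \<alpha> (M - i)
        < frac_coeff \<alpha> 0 - 2 * theta \<alpha> / real M powr \<alpha>"
      by linarith
  qed
  finally show ?thesis .
qed

lemma strang_C_eigenvalue_bound:
  assumes "1 < \<alpha>" "\<mu> > 0" "even M" "eigenvalue (strang_C \<alpha> \<mu> M) lam"
  shows "\<bar>lam - \<mu> * frac_coeff \<alpha> 0\<bar> < \<mu> * (frac_coeff \<alpha> 0 - 2 * theta \<alpha> / real (M div 2) powr \<alpha>)"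
proof -
  obtain i where i: "i < M" and disc: "\<bar>lam - strang_C \<alpha> \<mu> M $$ (i, i)\<bar>
      \<le> (\<Sum>k\<in>{..<M} - {i}. \<bar>strang_C \<alpha> \<mu> M $$ (i, k)\<bar>)"
    using eigenvalue_in_Gershgorin_disc[OF _ assms(4), of M] by (auto simp: strang_C_def)
  have N: "M div 2 \<ge> 1"
    using i assms(3) by auto
  have "strang_C \<alpha> \<mu> M $$ (i, i) = \<mu> * frac_coeff \<alpha> 0"
    using i N by (simp add: strang_C_def strang_row_def)
  moreover have "(\<Sum>k\<in>{..<M} - {i}. \<bar>strang_C \<alpha> \<mu> M $$ (i, k)\<bar>)
      = \<mu> * (\<Sum>k\<in>{..<M} - {i}. \<bar>strang_row \<alpha> M (nat ((int k - int i) mod int M))\<bar>)"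
    using i assms(2) by (simp add: strang_C_def abs_mult sum_distrib_left)
  ultimately have "\<bar>lam - \<mu> * frac_coeff \<alpha> 0\<bar> \<le> \<mu> * (frac_coeff \<alpha> 0 - 2 * frac_tail \<alpha> (M div 2))"
    using disc sum_cyclic_shift[OF i, of "\<lambda>m. \<bar>strang_row \<alpha> M m\<bar>"] strang_row_abs_sum i assms(3)
    by simp
  also have "\<dots> < \<mu> * (frac_coeff \<alpha> 0 - 2 * theta \<alpha> / real (M div 2) powr \<alpha>)"
    using frac_tail_gt[OF assms(1) N] assms(2) by (intro mult_strict_left_mono) auto
  finally show ?thesis .
qed

lemma eigenvalue_interval_of_disc:
  fixes \<gamma> \<tau> a b c m lam :: real and M :: nat
  defines "h \<equiv> (b - a) / (real M + 1)"
  defines "\<mu> \<equiv> \<gamma> * \<tau> / h powr \<alpha>"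
  assumes "\<gamma> > 0" "\<tau> > 0" "a < b" "c > 0" "m > 0" "c * m \<le> real M + 1"
    and disc: "\<bar>lam - \<mu> * frac_coeff \<alpha> 0\<bar> < \<mu> * (frac_coeff \<alpha> 0 - 2 * theta \<alpha> / m powr \<alpha>)"
  shows "2 * \<gamma> * \<tau> * (c powr \<alpha> * theta \<alpha>) / (b - a) powr \<alpha> < lam \<and>
    lam < 2 * \<gamma> * \<tau> / h powr \<alpha> *
      (Gamma (\<alpha> + 1) / Gamma (\<alpha> / 2 + 1) ^ 2 - c powr \<alpha> * theta \<alpha> * h powr \<alpha> / (b - a) powr \<alpha>)"
proof -
  have "h > 0" "\<mu> > 0"
    unfolding \<mu>_def h_def using assms by simp_all
  have "(c * m) powr \<alpha> \<le> (real M + 1) powr \<alpha>"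
    using assms \<alpha>_pos by (intro powr_mono2) auto
  hence weaker: "\<mu> * theta \<alpha> / (real M + 1) powr \<alpha> * c powr \<alpha> \<le> \<mu> * theta \<alpha> / m powr \<alpha>"
    using \<open>\<mu> > 0\<close> theta_nonneg assms(6,7) by (simp add: powr_mult divide_simps mult_left_mono)
  have "2 * \<gamma> * \<tau> * (c powr \<alpha> * theta \<alpha>) / (b - a) powr \<alpha>
      = 2 * (c powr \<alpha> * theta \<alpha>) * (\<gamma> * \<tau> / (b - a) powr \<alpha>)"
    by simp
  also have "\<gamma> * \<tau> / (b - a) powr \<alpha> = \<mu> / (real M + 1) powr \<alpha>"
    unfolding \<mu>_def h_def using assms by (simp add: powr_divide)
  finally have lower: "2 * \<gamma> * \<tau> * (c powr \<alpha> * theta \<alpha>) / (b - a) powr \<alpha>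
      = 2 * (\<mu> * theta \<alpha> / (real M + 1) powr \<alpha> * c powr \<alpha>)"
    by simp
  have upper: "2 * \<gamma> * \<tau> / h powr \<alpha> *
      (Gamma (\<alpha> + 1) / Gamma (\<alpha> / 2 + 1) ^ 2 - c powr \<alpha> * theta \<alpha> * h powr \<alpha> / (b - a) powr \<alpha>)
      = 2 * (\<mu> * frac_coeff \<alpha> 0) - 2 * \<gamma> * \<tau> * (c powr \<alpha> * theta \<alpha>) / (b - a) powr \<alpha>"
    unfolding \<mu>_def frac_coeff_0 using \<open>h > 0\<close> by (simp add: field_simps)
  have interval: "L < l \<and> l < U"
    if "\<bar>l - C\<bar> < C - 2 * Y" "X \<le> Y" "L = 2 * X" "U = 2 * C - L" for l C X Y L U :: real
    using that by (auto simp: abs_less_iff)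
  show ?thesis
    by (rule interval[OF _ weaker lower upper]) (use disc in \<open>simp add: algebra_simps\<close>)
qed

end

theorem lemma2:
  fixes \<alpha> \<gamma> \<tau> a b :: real and M :: nat
  assumes "1 < \<alpha>" "\<alpha> < 2" "\<gamma> > 0" "\<tau> > 0" "a < b"
    and "even M" "M > 0"
  defines "h \<equiv> (b - a) / (real M + 1)"
  defines "\<mu> \<equiv> \<gamma> * \<tau> / h powr \<alpha>"
  shows "(M \<ge> 4 \<longrightarrow> (\<forall>lam. eigenvalue (toeplitz_T \<alpha> \<mu> M) lam \<longrightarrow>
            2 * \<gamma> * \<tau> * theta \<alpha> / (b - a) powr \<alpha> < lam \<and>
            lam < 2 * \<gamma> * \<tau> / h powr \<alpha> *
              (Gamma (\<alpha> + 1) / Gamma (\<alpha> / 2 + 1) ^ 2 - theta \<alpha> * h powr \<alpha> / (b - a) powr \<alpha>)))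
       \<and> (M \<ge> 8 \<longrightarrow> (\<forall>lam. eigenvalue (strang_C \<alpha> \<mu> M) lam \<longrightarrow>
            2 powr (\<alpha> + 1) * \<gamma> * \<tau> * theta \<alpha> / (b - a) powr \<alpha> < lam \<and>
            lam < 2 * \<gamma> * \<tau> / h powr \<alpha> *
              (Gamma (\<alpha> + 1) / Gamma (\<alpha> / 2 + 1) ^ 2 - 2 powr \<alpha> * theta \<alpha> * h powr \<alpha> / (b - a) powr \<alpha>)))"
proof -
  have "\<mu> > 0"
    unfolding \<mu>_def h_def using assms by simp
  show ?thesis
  proof (rule conjI; intro impI allI)
    fix lam
    assume "eigenvalue (toeplitz_T \<alpha> \<mu> M) lam"
    hence "\<bar>lam - \<mu> * frac_coeff \<alpha> 0\<bar> < \<mu> * (frac_coeff \<alpha> 0 - 2 * theta \<alpha> / real M powr \<alpha>)"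
      using assms(1,2) \<open>\<mu> > 0\<close> by (intro toeplitz_T_eigenvalue_bound) auto
    thus "2 * \<gamma> * \<tau> * theta \<alpha> / (b - a) powr \<alpha> < lam \<and>
      lam < 2 * \<gamma> * \<tau> / h powr \<alpha> *
        (Gamma (\<alpha> + 1) / Gamma (\<alpha> / 2 + 1) ^ 2 - theta \<alpha> * h powr \<alpha> / (b - a) powr \<alpha>)"
      using eigenvalue_interval_of_disc[of \<alpha> \<gamma> \<tau> a b 1 "real M" M lam] assms
      unfolding h_def \<mu>_def by simp
  next
    fix lam
    assume "eigenvalue (strang_C \<alpha> \<mu> M) lam"
    hence "\<bar>lam - \<mu> * frac_coeff \<alpha> 0\<bar> < \<mu> * (frac_coeff \<alpha> 0 - 2 * theta \<alpha> / real (M div 2) powr \<alpha>)"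
      using assms(1,2,6) \<open>\<mu> > 0\<close> by (intro strang_C_eigenvalue_bound) auto
    moreover have "real (M div 2) > 0" "2 * real (M div 2) \<le> real M + 1"
      using assms(6,7) by (auto elim!: evenE)
    ultimately show "2 powr (\<alpha> + 1) * \<gamma> * \<tau> * theta \<alpha> / (b - a) powr \<alpha> < lam \<and>
      lam < 2 * \<gamma> * \<tau> / h powr \<alpha> *
        (Gamma (\<alpha> + 1) / Gamma (\<alpha> / 2 + 1) ^ 2 - 2 powr \<alpha> * theta \<alpha> * h powr \<alpha> / (b - a) powr \<alpha>)"
      using eigenvalue_interval_of_disc[of \<alpha> \<gamma> \<tau> a b 2 "real (M div 2)" M lam] assms
      unfolding h_def \<mu>_def by (simp add: powr_add mult_ac)
  qed
qed

end
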